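(* Let $p<q$ be odd primes. Then $n=pq$ is a Gaussian Carmichael number if and only if $q=p+2$ and $8$ divides $p+q$.
   Context: The function $\mathcal{F}$ is defined by $\mathcal{F}(n)=n-1$ if $n\equiv 1\pmod 4$, $\mathcal{F}(n)=n+1$ if $n\equiv 3 \pmod 4$, $\mathcal{F}(n)=n$ otherwise. A composite integer $n$ is a Gaussian Fermat pseudoprime to base $z\in\mathbb{Z}[i]$ if $\gcd(n,z\overline{z})=1$ and $(z/\overline{z})^{\mathcal{F}(n)}\equiv 1\pmod n$ in $\mathbb{Z}[i]/n\mathbb{Z}[i]$. A composite $n$ is a Gaussian Carmichael number if it is a Gaussian Fermat pseudoprime to base $z$ for every $z\in\mathbb{Z}[i]$ with $\gcd(n,z\overline{z})=1$. *)

theory Defs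
  imports "HOL-Computational_Algebra.Primes"
begin

text \<open>Gaussian integers a + b i represented as pairs (a, b) of integers.\<close>
type_synonym gint = "int \<times> int"

definition gmul :: "gint \<Rightarrow> gint \<Rightarrow> gint" where
  "gmul z w = (fst z * fst w - snd z * snd w, fst z * snd w + snd z * fst w)"

definition gconj :: "gint \<Rightarrow> gint" where
  "gconj z = (fst z, - snd z)"

definition gone :: gint where "gone = (1, 0)"

fun gpow :: "gint \<Rightarrow> nat \<Rightarrow> gint" where
  "gpow z 0 = gone"
| "gpow z (Suc k) = gmul z (gpow z k)"

definition gnorm :: "gint \<Rightarrow> int" where
  "gnorm z = fst z ^ 2 + snd z ^ 2"

definition gcong :: "nat \<Rightarrow> gint \<Rightarrow> gint \<Rightarrow> bool" where
  "gcong n z w \<longleftrightarrow> int n dvd fst z - fst w \<and> int n dvd snd z - snd w"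

definition F :: "nat \<Rightarrow> nat" where
  "F n = (if n mod 4 = 1 then n - 1 else if n mod 4 = 3 then n + 1 else n)"

definition composite :: "nat \<Rightarrow> bool" where
  "composite n \<longleftrightarrow> n > 1 \<and> \<not> prime n"

text \<open>(z / conj z)^F(n) = 1 in Z[i]/nZ[i]: u is the inverse of conj z modulo n.\<close>
definition gauss_fermat_psp :: "nat \<Rightarrow> gint \<Rightarrow> bool" where
  "gauss_fermat_psp n z \<longleftrightarrow> composite n \<and> coprime (int n) (gnorm z) \<and>
     (\<exists>u. gcong n (gmul u (gconj z)) gone \<and> gcong n (gpow (gmul z u) (F n)) gone)"

definition gauss_carmichael :: "nat \<Rightarrow> bool" where
  "gauss_carmichael n \<longleftrightarrow> composite n \<and>
     (\<forall>z. coprime (int n) (gnorm z) \<longrightarrow> gauss_fermat_psp n z)"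

end

theory Submission
  imports Defs "HOL-Number_Theory.Number_Theory" "HOL-Algebra.Multiplicative_Group"
begin

text \<open>
  For z prime to n the quotient w = z / conj z is a unit of norm w * conj w = 1 in \<int>[i]/n\<int>[i].
  Modulo an odd prime r the Frobenius x \<mapsto> x^r is the identity if r \<equiv> 1 (mod 4) and complex
  conjugation if r \<equiv> 3 (mod 4); either way w^F(r) \<equiv> 1 (mod r). The exponent F(r) is attained:
  for r \<equiv> 1 reduce along i \<mapsto> \<surd>-1 and choose z \<mapsto> a primitive root, conj z \<mapsto> 1; for r \<equiv> 3,
  \<int>[i]/r\<int>[i] is the field with r^2 elements and a generator z gives w of order r + 1.
  So if pq is a Gaussian Carmichael number, testing a z that is 1 modulo p and attains F(q) modulo q
  gives F(q) | F(pq), which for p < q forces q = p + 2 \<equiv> 1 (mod 4). Conversely, for such twin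
  primes F(p) = F(q) = p + 1 and F(pq) = (p + 1)^2, and the Chinese remainder theorem concludes.
\<close>

section \<open>Gaussian integers and congruences\<close>

datatype gauss_int = Gauss (re: int) (im: int)

instantiation gauss_int :: comm_ring_1
begin
definition "zero_gauss_int = Gauss 0 0"
definition "one_gauss_int = Gauss 1 0"
definition "plus_gauss_int x y = Gauss (re x + re y) (im x + im y)"
definition "minus_gauss_int x y = Gauss (re x - re y) (im x - im y)"
definition "uminus_gauss_int x = Gauss (- re x) (- im x)"
definition "times_gauss_int x y = Gauss (re x * re y - im x * im y) (re x * im y + im x * re y)"
instance
  by intro_classes
    (auto simp: zero_gauss_int_def one_gauss_int_def plus_gauss_int_def minus_gauss_int_def
      uminus_gauss_int_def times_gauss_int_def algebra_simps)
end

lemma gauss_int_simps [simp]: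
  "re 0 = 0" "im 0 = 0" "re 1 = 1" "im 1 = 0"
  "re (x + y) = re x + re y" "im (x + y) = im x + im y"
  "re (x - y) = re x - re y" "im (x - y) = im x - im y"
  "re (- x) = - re x" "im (- x) = - im x"
  "re (x * y) = re x * re y - im x * im y" "im (x * y) = re x * im y + im x * re y"
  by (simp_all add: zero_gauss_int_def one_gauss_int_def plus_gauss_int_def minus_gauss_int_def
      uminus_gauss_int_def times_gauss_int_def)

lemma gauss_int_eqI: "re x = re y \<Longrightarrow> im x = im y \<Longrightarrow> x = y"
  by (cases x, cases y) auto

lemma of_nat_gauss_int: "of_nat n = Gauss (int n) 0"
  by (induction n) (auto intro: gauss_int_eqI)

lemma of_int_gauss_int: "of_int k = Gauss k 0"
  by (cases k rule: int_cases) (auto simp: of_nat_gauss_int intro: gauss_int_eqI)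

lemma re_of_int [simp]: "re (of_int k) = k" and im_of_int [simp]: "im (of_int k) = 0"
  and re_of_nat [simp]: "re (of_nat n) = int n" and im_of_nat [simp]: "im (of_nat n) = 0"
  by (simp_all add: of_int_gauss_int of_nat_gauss_int)

lemma of_nat_dvd_gauss_int_iff: "of_nat n dvd x \<longleftrightarrow> int n dvd re x \<and> int n dvd im x"
proof
  assume "int n dvd re x \<and> int n dvd im x"
  then obtain a b where "re x = int n * a" "im x = int n * b"
    unfolding dvd_def by blast
  then have "x = of_nat n * Gauss a b"
    by (intro gauss_int_eqI) auto
  then show "of_nat n dvd x"
    by simp
qed auto

definition gauss_cnj :: "gauss_int \<Rightarrow> gauss_int" where
  "gauss_cnj x = Gauss (re x) (- im x)"

definition gauss_norm :: "gauss_int \<Rightarrow> int" where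
  "gauss_norm x = re x ^ 2 + im x ^ 2"

lemma gauss_cnj_mult: "gauss_cnj (x * y) = gauss_cnj x * gauss_cnj y"
  by (auto simp: gauss_cnj_def intro: gauss_int_eqI)

lemma gauss_cnj_one [simp]: "gauss_cnj 1 = 1"
  by (auto simp: gauss_cnj_def intro: gauss_int_eqI)

lemma gauss_cnj_cnj [simp]: "gauss_cnj (gauss_cnj x) = x"
  by (simp add: gauss_cnj_def)

lemma mult_gauss_cnj: "x * gauss_cnj x = of_int (gauss_norm x)"
  by (auto simp: gauss_cnj_def gauss_norm_def power2_eq_square intro: gauss_int_eqI)

text \<open>The pair type gint carries no ring structure; gauss_of transports it to the ring gauss_int.\<close>

definition gauss_of :: "gint \<Rightarrow> gauss_int" where
  "gauss_of z = Gauss (fst z) (snd z)"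

lemma gauss_of_gmul: "gauss_of (gmul z w) = gauss_of z * gauss_of w"
  by (auto simp: gauss_of_def gmul_def intro: gauss_int_eqI)

lemma gauss_of_gone: "gauss_of gone = 1"
  by (auto simp: gauss_of_def gone_def intro: gauss_int_eqI)

lemma gauss_of_gpow: "gauss_of (gpow z k) = gauss_of z ^ k"
  by (induction k) (simp_all add: gauss_of_gmul gauss_of_gone)

lemma gauss_of_gconj: "gauss_of (gconj z) = gauss_cnj (gauss_of z)"
  by (simp add: gauss_of_def gconj_def gauss_cnj_def)

lemma gnorm_eq_gauss_norm: "gnorm z = gauss_norm (gauss_of z)"
  by (simp add: gauss_of_def gnorm_def gauss_norm_def)

lemma gauss_of_re_im [simp]: "gauss_of (re x, im x) = x"
  by (simp add: gauss_of_def)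

lemma ex_gauss_of_iff: "(\<exists>z. P (gauss_of z)) \<longleftrightarrow> (\<exists>x. P x)"
  by (metis gauss_of_re_im)

lemma all_gauss_of_iff: "(\<forall>z. P (gauss_of z)) \<longleftrightarrow> (\<forall>x. P x)"
  by (metis gauss_of_re_im)

definition gauss_cong :: "nat \<Rightarrow> gauss_int \<Rightarrow> gauss_int \<Rightarrow> bool" where
  "gauss_cong n x y \<longleftrightarrow> of_nat n dvd x - y"

lemma gcong_iff_gauss_cong: "gcong n z w \<longleftrightarrow> gauss_cong n (gauss_of z) (gauss_of w)"
  by (simp add: gcong_def gauss_cong_def of_nat_dvd_gauss_int_iff gauss_of_def)

lemma gauss_cong_refl [simp]: "gauss_cong n x x"
  by (simp add: gauss_cong_def)

lemma gauss_cong_sym: "gauss_cong n x y \<Longrightarrow> gauss_cong n y x"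
  unfolding gauss_cong_def by (metis dvd_minus_iff minus_diff_eq)

lemma gauss_cong_trans [trans]: "gauss_cong n x y \<Longrightarrow> gauss_cong n y z \<Longrightarrow> gauss_cong n x z"
  unfolding gauss_cong_def by (metis diff_add_cancel add_diff_eq dvd_add)

lemma gauss_cong_add: "gauss_cong n x y \<Longrightarrow> gauss_cong n x' y' \<Longrightarrow> gauss_cong n (x + x') (y + y')"
proof -
  assume "gauss_cong n x y" "gauss_cong n x' y'"
  moreover have "x + x' - (y + y') = (x - y) + (x' - y')"
    by (simp add: algebra_simps)
  ultimately show ?thesis
    unfolding gauss_cong_def by (metis dvd_add)
qed

lemma gauss_cong_mult:
  assumes "gauss_cong n x y" "gauss_cong n x' y'"
  shows "gauss_cong n (x * x') (y * y')"
proof -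
  have "x * x' - y * y' = (x - y) * x' + y * (x' - y')"
    by (simp add: algebra_simps)
  then show ?thesis
    using assms unfolding gauss_cong_def by (metis dvd_add dvd_mult dvd_mult2)
qed

lemma gauss_cong_pow: "gauss_cong n x y \<Longrightarrow> gauss_cong n (x ^ k) (y ^ k)"
  by (induction k) (auto intro: gauss_cong_mult)

lemma gauss_cong_dvd: "m dvd n \<Longrightarrow> gauss_cong n x y \<Longrightarrow> gauss_cong m x y"
  unfolding gauss_cong_def by (metis dvd_trans of_nat_mult dvdE dvd_triv_left)

lemma gauss_cong_cnj: "gauss_cong n x y \<Longrightarrow> gauss_cong n (gauss_cnj x) (gauss_cnj y)"
  by (simp add: gauss_cong_def of_nat_dvd_gauss_int_iff gauss_cnj_def)
    (metis dvd_minus_iff minus_diff_eq)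

lemma gauss_cong_of_int_iff: "gauss_cong n (of_int a) (of_int b) \<longleftrightarrow> [a = b] (mod int n)"
  by (simp add: gauss_cong_def of_nat_dvd_gauss_int_iff cong_iff_dvd_diff)

lemma gauss_cong_imp_norm_cong:
  assumes "gauss_cong n x y"
  shows "[gauss_norm x = gauss_norm y] (mod int n)"
proof -
  have "gauss_cong n (x * gauss_cnj x) (y * gauss_cnj y)"
    using assms by (intro gauss_cong_mult gauss_cong_cnj)
  then show ?thesis
    by (simp add: mult_gauss_cnj gauss_cong_of_int_iff)
qed

lemma gauss_cong_mult_coprime:
  assumes "coprime m n" "gauss_cong m x y" "gauss_cong n x y"
  shows "gauss_cong (m * n) x y"
proof -
  have "int m * int n dvd re (x - y) \<and> int m * int n dvd im (x - y)"
    using assms by (simp add: gauss_cong_def of_nat_dvd_gauss_int_iff divides_mult)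
  then show ?thesis
    unfolding gauss_cong_def of_nat_dvd_gauss_int_iff by simp
qed

definition conj_ratio_pow_one :: "nat \<Rightarrow> gauss_int \<Rightarrow> nat \<Rightarrow> bool" where
  "conj_ratio_pow_one n z m \<longleftrightarrow>
     (\<exists>u. gauss_cong n (u * gauss_cnj z) 1 \<and> gauss_cong n ((z * u) ^ m) 1)"

lemma gauss_fermat_psp_iff:
  "gauss_fermat_psp n z \<longleftrightarrow> composite n \<and> coprime (int n) (gauss_norm (gauss_of z)) \<and>
     conj_ratio_pow_one n (gauss_of z) (F n)"
proof -
  have "(\<exists>u. gcong n (gmul u (gconj z)) gone \<and> gcong n (gpow (gmul z u) (F n)) gone) \<longleftrightarrow>
        (\<exists>u. gauss_cong n (gauss_of u * gauss_cnj (gauss_of z)) 1 \<and>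
             gauss_cong n ((gauss_of z * gauss_of u) ^ F n) 1)"
    by (simp add: gcong_iff_gauss_cong gauss_of_gmul gauss_of_gpow gauss_of_gconj gauss_of_gone)
  also have "\<dots> \<longleftrightarrow> conj_ratio_pow_one n (gauss_of z) (F n)"
    unfolding conj_ratio_pow_one_def by (rule ex_gauss_of_iff)
  finally show ?thesis
    by (simp add: gauss_fermat_psp_def gnorm_eq_gauss_norm)
qed

lemma gauss_carmichael_iff:
  "gauss_carmichael n \<longleftrightarrow>
     composite n \<and> (\<forall>z. coprime (int n) (gauss_norm z) \<longrightarrow> conj_ratio_pow_one n z (F n))"
proof -
  have "(\<forall>z. coprime (int n) (gnorm z) \<longrightarrow> gauss_fermat_psp n z) \<longleftrightarrow>
        (\<forall>z. coprime (int n) (gauss_norm (gauss_of z)) \<longrightarrow>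
           composite n \<and> conj_ratio_pow_one n (gauss_of z) (F n))"
    by (auto simp: gauss_fermat_psp_iff gnorm_eq_gauss_norm)
  also have "\<dots> \<longleftrightarrow> (\<forall>z. coprime (int n) (gauss_norm z) \<longrightarrow> composite n \<and> conj_ratio_pow_one n z (F n))"
    by (rule all_gauss_of_iff)
  finally show ?thesis
    by (auto simp: gauss_carmichael_def)
qed

lemma conj_ratio_pow_one_dvd:
  "d dvd n \<Longrightarrow> conj_ratio_pow_one n z m \<Longrightarrow> conj_ratio_pow_one d z m"
  unfolding conj_ratio_pow_one_def using gauss_cong_dvd by blast

lemma conj_ratio_pow_one_cong:
  assumes "gauss_cong n z z'" "conj_ratio_pow_one n z m"
  shows "conj_ratio_pow_one n z' m"
proof -
  obtain u where u: "gauss_cong n (u * gauss_cnj z) 1" "gauss_cong n ((z * u) ^ m) 1"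
    using assms(2) unfolding conj_ratio_pow_one_def by blast
  have z'z: "gauss_cong n z' z"
    using assms(1) by (rule gauss_cong_sym)
  then have "gauss_cong n (u * gauss_cnj z') (u * gauss_cnj z)"
    by (intro gauss_cong_mult gauss_cong_refl gauss_cong_cnj)
  then have "gauss_cong n (u * gauss_cnj z') 1"
    using u(1) by (rule gauss_cong_trans)
  moreover have "gauss_cong n ((z' * u) ^ m) ((z * u) ^ m)"
    using z'z by (intro gauss_cong_pow gauss_cong_mult gauss_cong_refl)
  then have "gauss_cong n ((z' * u) ^ m) 1"
    using u(2) by (rule gauss_cong_trans)
  ultimately show ?thesis
    unfolding conj_ratio_pow_one_def by blast
qed

lemma gauss_cnj_inverse_exists:
  assumes "coprime (int n) (gauss_norm z)"
  shows "\<exists>u. gauss_cong n (u * gauss_cnj z) 1"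
proof -
  obtain t where "[gauss_norm z * t = 1] (mod int n)"
    using assms cong_solve_coprime_int[of "gauss_norm z" "int n"] by (auto simp: coprime_commute)
  moreover have "of_int t * z * gauss_cnj z = of_int (gauss_norm z * t)"
    by (simp add: mult_gauss_cnj[symmetric] algebra_simps)
  ultimately have "gauss_cong n (of_int t * z * gauss_cnj z) 1"
    by (metis gauss_cong_of_int_iff of_int_1)
  then show ?thesis by blast
qed

lemma coprime_gauss_norm_cong:
  "gauss_cong n x y \<Longrightarrow> coprime (int n) (gauss_norm x) \<longleftrightarrow> coprime (int n) (gauss_norm y)"
proof -
  assume "gauss_cong n x y"
  then have "[gauss_norm x = gauss_norm y] (mod int n)"
    by (rule gauss_cong_imp_norm_cong)
  then have "coprime (gauss_norm x) (int n) \<longleftrightarrow> coprime (gauss_norm y) (int n)"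
    using cong_imp_coprime cong_sym by blast
  then show ?thesis
    by (simp add: coprime_commute)
qed

lemma gauss_crt_exists:
  assumes "coprime m n"
  obtains z where "gauss_cong m z x" "gauss_cong n z y"
proof -
  have mn: "coprime (int m) (int n)" using assms by simp
  obtain a where "[a = re x] (mod int m)" "[a = re y] (mod int n)"
    using binary_chinese_remainder_int[OF mn] by blast
  moreover obtain b where "[b = im x] (mod int m)" "[b = im y] (mod int n)"
    using binary_chinese_remainder_int[OF mn] by blast
  ultimately have "gauss_cong m (Gauss a b) x" "gauss_cong n (Gauss a b) y"
    by (simp_all add: gauss_cong_def of_nat_dvd_gauss_int_iff cong_iff_dvd_diff)
  then show ?thesis by (rule that)
qed

section \<open>Frobenius modulo a prime and the twin prime case\<close>

lemma gauss_cong_add_pow_prime: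
  assumes "prime p"
  shows "gauss_cong p ((x + y) ^ p) (x ^ p + y ^ p)"
proof -
  obtain m where pm: "p = Suc m" using assms by (cases p) auto
  define f where "f k = of_nat (p choose k) * x ^ k * y ^ (p - k)" for k
  have "(x + y) ^ p = (\<Sum>k\<le>p. f k)"
    by (simp add: binomial_ring f_def)
  also have "\<dots> = f 0 + (\<Sum>i<m. f (Suc i)) + f (Suc m)"
    unfolding pm by (simp add: sum.atMost_shift)
  also have "f 0 = y ^ p" by (simp add: f_def)
  also have "f (Suc m) = x ^ p" by (simp add: f_def pm)
  finally have eq: "(x + y) ^ p - (x ^ p + y ^ p) = (\<Sum>i<m. f (Suc i))"
    by simp
  have "of_nat p dvd f (Suc i)" if "i < m" for i
  proof -
    have "p dvd (p choose Suc i)"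
      using that pm assms by (intro dvd_choose_prime) auto
    then show ?thesis
      by (auto simp: f_def)
  qed
  then have "of_nat p dvd (\<Sum>i<m. f (Suc i))"
    by (intro dvd_sum) auto
  then show ?thesis
    unfolding gauss_cong_def eq .
qed

lemma gauss_cong_of_nat_pow_prime:
  assumes "prime p"
  shows "gauss_cong p (of_nat b ^ p) (of_nat b)"
proof (induction b)
  case 0
  then show ?case using assms by (simp add: zero_power prime_gt_0_nat)
next
  case (Suc b)
  have "gauss_cong p ((of_nat b + 1) ^ p) (of_nat b ^ p + 1 ^ p)"
    by (rule gauss_cong_add_pow_prime[OF assms])
  also have "gauss_cong p (of_nat b ^ p + 1 ^ p) (of_nat b + 1)"
    using Suc by (simp add: gauss_cong_add)
  finally show ?case
    by (simp add: add.commute)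
qed

lemma gauss_cong_of_int_pow_prime:
  assumes "prime p"
  shows "gauss_cong p (of_int a ^ p) (of_int a)"
proof -
  define b where "b = nat (a mod int p)"
  have "int p > 0"
    using assms prime_gt_0_nat by simp
  then have b: "gauss_cong p (of_nat b) (of_int a)"
    by (simp add: b_def gauss_cong_def of_nat_dvd_gauss_int_iff mod_eq_dvd_iff[symmetric])
  have "gauss_cong p (of_int a ^ p) (of_nat b ^ p)"
    using gauss_cong_sym[OF b] by (rule gauss_cong_pow)
  also have "gauss_cong p \<dots> (of_nat b)"
    using assms by (rule gauss_cong_of_nat_pow_prime)
  also have "gauss_cong p \<dots> (of_int a)"
    by (rule b)
  finally show ?thesis .
qed

definition gauss_i :: gauss_int where "gauss_i = Gauss 0 1"

lemma gauss_i_pow_mod_4: "gauss_i ^ n = gauss_i ^ (n mod 4)"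
proof -
  have "gauss_i ^ n = gauss_i ^ (4 * (n div 4) + n mod 4)"
    by simp
  also have "\<dots> = (gauss_i ^ 4) ^ (n div 4) * gauss_i ^ (n mod 4)"
    by (simp only: power_add power_mult)
  also have "gauss_i ^ 4 = 1"
    by (auto simp: gauss_i_def eval_nat_numeral intro: gauss_int_eqI)
  finally show ?thesis
    by simp
qed

lemma gauss_cong_pow_prime:
  assumes "prime p"
  shows "gauss_cong p (x ^ p) (of_int (re x) + of_int (im x) * gauss_i ^ p)"
proof -
  have x: "x = of_int (re x) + of_int (im x) * gauss_i"
    by (auto simp: gauss_i_def intro: gauss_int_eqI)
  have "gauss_cong p (x ^ p) (of_int (re x) ^ p + of_int (im x) ^ p * gauss_i ^ p)"
    by (subst x) (simp add: gauss_cong_add_pow_prime[OF assms] flip: power_mult_distrib)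
  also have "gauss_cong p \<dots> (of_int (re x) + of_int (im x) * gauss_i ^ p)"
    by (intro gauss_cong_add gauss_cong_mult gauss_cong_of_int_pow_prime assms gauss_cong_refl)
  finally show ?thesis .
qed

lemma gauss_frobenius_1_mod_4:
  assumes "prime p" "p mod 4 = 1"
  shows "gauss_cong p (x ^ p) x"
proof -
  have eq: "of_int (re x) + of_int (im x) * gauss_i ^ p = x"
    using assms(2) by (subst gauss_i_pow_mod_4) (auto simp: gauss_i_def intro: gauss_int_eqI)
  show ?thesis
    using gauss_cong_pow_prime[OF assms(1), of x] unfolding eq .
qed

lemma gauss_frobenius_3_mod_4:
  assumes "prime p" "p mod 4 = 3"
  shows "gauss_cong p (x ^ p) (gauss_cnj x)"
proof -
  have eq: "of_int (re x) + of_int (im x) * gauss_i ^ p = gauss_cnj x"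
  proof -
    have "gauss_i ^ p = gauss_i * gauss_i * gauss_i"
      using assms(2) by (subst gauss_i_pow_mod_4) (simp add: power3_eq_cube)
    then show ?thesis
      by (simp add: gauss_i_def gauss_cnj_def gauss_int_eqI)
  qed
  show ?thesis
    using gauss_cong_pow_prime[OF assms(1), of x] unfolding eq .
qed

lemma gauss_cong_norm_conj_ratio:
  assumes "gauss_cong n (u * gauss_cnj z) 1"
  shows "gauss_cong n (z * u * gauss_cnj (z * u)) 1"
proof -
  have "z * u * gauss_cnj (z * u) = (u * gauss_cnj z) * gauss_cnj (u * gauss_cnj z)"
    by (simp add: gauss_cnj_mult algebra_simps)
  also have "gauss_cong n \<dots> (1 * gauss_cnj 1)"
    using assms by (intro gauss_cong_mult gauss_cong_cnj)
  finally show ?thesis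
    by simp
qed

lemma gauss_norm_one_pow_F_prime:
  assumes "prime r" "odd r" and norm: "gauss_cong r (w * gauss_cnj w) 1"
  shows "gauss_cong r (w ^ F r) 1"
proof (cases "r mod 4 = 1")
  case True
  then have "Suc (F r) = r"
    by (simp add: F_def)
  have "gauss_cong r (w ^ F r * 1) (w ^ F r * (w * gauss_cnj w))"
    using gauss_cong_sym[OF norm] by (intro gauss_cong_mult gauss_cong_refl)
  also have "w ^ F r * (w * gauss_cnj w) = w ^ r * gauss_cnj w"
    using \<open>Suc (F r) = r\<close> by (metis mult.assoc power_Suc2)
  also have "gauss_cong r \<dots> (w * gauss_cnj w)"
    using gauss_frobenius_1_mod_4[OF assms(1) True] by (intro gauss_cong_mult gauss_cong_refl)
  also have "gauss_cong r \<dots> 1"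
    by (rule norm)
  finally show ?thesis
    by simp
next
  case False
  then have r3: "r mod 4 = 3"
    using \<open>odd r\<close> by presburger
  then have "w ^ F r = w ^ r * w"
    by (simp add: F_def power_Suc2)
  also have "gauss_cong r \<dots> (gauss_cnj w * w)"
    using gauss_frobenius_3_mod_4[OF assms(1) r3] by (intro gauss_cong_mult gauss_cong_refl)
  also have "gauss_cong r \<dots> 1"
    using norm by (simp add: mult.commute)
  finally show ?thesis .
qed

lemma conj_ratio_pow_one_twin_primes:
  assumes p: "prime p" "p mod 4 = 3" and q: "prime (p + 2)"
    and z: "coprime (int (p * (p + 2))) (gauss_norm z)"
  shows "conj_ratio_pow_one (p * (p + 2)) z ((p + 1) ^ 2)"
proof -
  let ?q = "p + 2"
  obtain u where u: "gauss_cong (p * ?q) (u * gauss_cnj z) 1"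
    using gauss_cnj_inverse_exists[OF z] by blast
  define w where "w = z * u"
  have norm: "gauss_cong (p * ?q) (w * gauss_cnj w) 1"
    unfolding w_def using u by (rule gauss_cong_norm_conj_ratio)
  have odd: "odd p" "odd ?q"
    using p(2) by presburger+
  have "F p = p + 1" "F ?q = p + 1"
    using p(2) by (simp_all add: F_def) presburger
  moreover have "gauss_cong p (w ^ F p) 1"
    using gauss_cong_dvd[OF dvd_triv_left norm] by (rule gauss_norm_one_pow_F_prime[OF p(1) odd(1)])
  moreover have "gauss_cong ?q (w ^ F ?q) 1"
    using gauss_cong_dvd[OF dvd_triv_right norm] by (rule gauss_norm_one_pow_F_prime[OF q odd(2)])
  ultimately have "gauss_cong p (w ^ (p + 1)) 1" "gauss_cong ?q (w ^ (p + 1)) 1"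
    by simp_all
  moreover have "coprime p ?q"
    using p q by (simp add: primes_coprime)
  ultimately have "gauss_cong (p * ?q) (w ^ (p + 1)) 1"
    by (rule gauss_cong_mult_coprime[rotated])
  then have "gauss_cong (p * ?q) ((w ^ (p + 1)) ^ (p + 1)) (1 ^ (p + 1))"
    by (rule gauss_cong_pow)
  then have "gauss_cong (p * ?q) (w ^ (p + 1) ^ 2) 1"
    by (simp only: power_one power2_eq_square power_mult)
  then show ?thesis
    using u unfolding conj_ratio_pow_one_def w_def by blast
qed

section \<open>Split primes\<close>

lemma minus_one_square_mod_prime_iff:
  assumes r: "prime r" "odd r"
  shows "(\<exists>c. [c ^ 2 = -1] (mod int r)) \<longleftrightarrow> r mod 4 = 1"
proof -
  have r2: "2 < r"
    using r prime_gt_1_nat[OF r(1)] by (cases "r = 2") auto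
  have euler: "[Legendre (-1) (int r) = (-1) ^ ((r - 1) div 2)] (mod int r)"
    using euler_criterion[OF r(1) r2] by simp
  have "\<not> [-1 = 0] (mod int r)"
    using r2 by (simp add: cong_iff_dvd_diff zdvd_not_zless)
  then have legendre: "Legendre (-1) (int r) = (if QuadRes (int r) (-1) then 1 else -1)"
    by (simp add: Legendre_def)
  have minus_one_ne_one: "\<not> [-1 = 1] (mod int r)"
  proof
    assume "[-1 = 1] (mod int r)"
    then have "int r \<le> 2"
      by (intro zdvd_imp_le) (simp_all add: cong_iff_dvd_diff dvd_diff_commute)
    then show False using r2 by simp
  qed
  show ?thesis
  proof (cases "r mod 4 = 1")
    case True
    then have "even ((r - 1) div 2)" by presburger
    then have "QuadRes (int r) (-1)"
      using euler legendre minus_one_ne_one by (auto split: if_splits)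
    then show ?thesis
      using True by (simp add: QuadRes_def)
  next
    case False
    then have "odd ((r - 1) div 2)" using r(2) by presburger
    then have "\<not> QuadRes (int r) (-1)"
      using euler legendre minus_one_ne_one by (auto split: if_splits simp: cong_sym_eq)
    then show ?thesis
      using False by (simp add: QuadRes_def)
  qed
qed

definition gauss_eval :: "int \<Rightarrow> gauss_int \<Rightarrow> int" where
  "gauss_eval c x = re x + im x * c"

lemma gauss_eval_one [simp]: "gauss_eval c 1 = 1"
  by (simp add: gauss_eval_def)

lemma gauss_eval_mult:
  assumes "[c ^ 2 = -1] (mod int r)"
  shows "[gauss_eval c (x * y) = gauss_eval c x * gauss_eval c y] (mod int r)"
proof -
  have "[gauss_eval c (x * y) + im x * im y * (c ^ 2 + 1) = gauss_eval c (x * y) + im x * im y * 0] (mod int r)"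
    using assms by (intro cong_add cong_mult cong_refl) (simp add: cong_iff_dvd_diff)
  moreover have "gauss_eval c x * gauss_eval c y = gauss_eval c (x * y) + im x * im y * (c ^ 2 + 1)"
    by (simp add: gauss_eval_def algebra_simps power2_eq_square)
  ultimately show ?thesis
    by (simp add: cong_sym_eq)
qed

lemma gauss_eval_pow:
  assumes "[c ^ 2 = -1] (mod int r)"
  shows "[gauss_eval c (x ^ m) = gauss_eval c x ^ m] (mod int r)"
proof (induction m)
  case (Suc m)
  have "[gauss_eval c (x * x ^ m) = gauss_eval c x * gauss_eval c (x ^ m)] (mod int r)"
    by (rule gauss_eval_mult[OF assms])
  also have "[gauss_eval c x * gauss_eval c (x ^ m) = gauss_eval c x * gauss_eval c x ^ m] (mod int r)"
    using Suc by (intro cong_mult cong_refl)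
  finally show ?case
    by simp
qed simp

lemma gauss_eval_cong:
  assumes "gauss_cong r x y"
  shows "[gauss_eval c x = gauss_eval c y] (mod int r)"
proof -
  have "gauss_eval c x - gauss_eval c y = re (x - y) + im (x - y) * c"
    by (simp add: gauss_eval_def algebra_simps)
  then show ?thesis
    using assms by (simp add: cong_iff_dvd_diff gauss_cong_def of_nat_dvd_gauss_int_iff)
qed

lemma conj_ratio_order_split_prime:
  assumes r: "prime r" "r mod 4 = 1"
  obtains z where "coprime (int r) (gauss_norm z)" and "\<And>m. conj_ratio_pow_one r z m \<Longrightarrow> r - 1 dvd m"
proof -
  have "odd r"
    using r(2) by presburger
  then obtain c where c: "[c ^ 2 = -1] (mod int r)"
    using minus_one_square_mod_prime_iff r by blast
  obtain g where "residue_primroot r g"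
    using prime_primitive_root_exists r(1) prime_gt_1_nat by blast
  then have ord_g: "ord r g = r - 1" and coprime_g: "coprime r g"
    using r(1) by (auto simp: residue_primroot_def totient_prime)
  define h :: int where "h = (int r + 1) div 2"
  have "2 * h = int r + 1"
    unfolding h_def using \<open>odd r\<close> by presburger
  then have h: "[2 * h = 1] (mod int r)"
    by (simp add: cong_iff_dvd_diff)
  have cc: "[c * c = -1] (mod int r)"
    using c by (simp add: power2_eq_square)
  \<comment> \<open>Under i \<mapsto> c the element z goes to g and its conjugate to 1.\<close>
  define z where "z = Gauss (h * (int g + 1)) (- h * (int g - 1) * c)"
  have eval_z: "[gauss_eval c z = int g] (mod int r)"
  proof -
    have "gauss_eval c z = h * (int g + 1) - h * (int g - 1) * (c * c)"
      by (simp add: gauss_eval_def z_def algebra_simps)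
    also have "[\<dots> = h * (int g + 1) - h * (int g - 1) * (-1)] (mod int r)"
      by (intro cong_diff cong_refl cong_mult cc)
    also have "h * (int g + 1) - h * (int g - 1) * (-1) = (2 * h) * int g"
      by (simp add: algebra_simps)
    also have "[\<dots> = 1 * int g] (mod int r)"
      by (intro cong_mult h cong_refl)
    finally show ?thesis
      by simp
  qed
  have eval_cnj_z: "[gauss_eval c (gauss_cnj z) = 1] (mod int r)"
  proof -
    have "gauss_eval c (gauss_cnj z) = h * (int g + 1) + h * (int g - 1) * (c * c)"
      by (simp add: gauss_eval_def z_def gauss_cnj_def algebra_simps)
    also have "[\<dots> = h * (int g + 1) + h * (int g - 1) * (-1)] (mod int r)"
      by (intro cong_add cong_refl cong_mult cc)
    also have "h * (int g + 1) + h * (int g - 1) * (-1) = 2 * h"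
      by (simp add: algebra_simps)
    finally show ?thesis
      using h by (rule cong_trans)
  qed
  have "[gauss_norm z = int g] (mod int r)"
  proof -
    have "gauss_norm z = gauss_eval c (z * gauss_cnj z)"
      by (simp add: mult_gauss_cnj gauss_eval_def)
    also have "[\<dots> = gauss_eval c z * gauss_eval c (gauss_cnj z)] (mod int r)"
      by (rule gauss_eval_mult[OF c])
    also have "[gauss_eval c z * gauss_eval c (gauss_cnj z) = int g * 1] (mod int r)"
      by (intro cong_mult eval_z eval_cnj_z)
    finally show ?thesis
      by simp
  qed
  then have "coprime (int r) (gauss_norm z)"
    using coprime_g cong_imp_coprime cong_sym by (metis coprime_commute coprime_int_iff)
  moreover have "r - 1 dvd m" if pow_one: "conj_ratio_pow_one r z m" for m
  proof -
    obtain u where u: "gauss_cong r (u * gauss_cnj z) 1" "gauss_cong r ((z * u) ^ m) 1"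
      using pow_one unfolding conj_ratio_pow_one_def by blast
    have "[gauss_eval c u * 1 = gauss_eval c u * gauss_eval c (gauss_cnj z)] (mod int r)"
      using eval_cnj_z by (intro cong_mult cong_refl) (rule cong_sym)
    also have "[gauss_eval c u * gauss_eval c (gauss_cnj z) = gauss_eval c (u * gauss_cnj z)] (mod int r)"
      using gauss_eval_mult[OF c] by (rule cong_sym)
    also have "[gauss_eval c (u * gauss_cnj z) = 1] (mod int r)"
      using gauss_eval_cong[OF u(1)] by simp
    finally have eval_u: "[gauss_eval c u = 1] (mod int r)"
      by simp
    have "[gauss_eval c ((z * u) ^ m) = gauss_eval c (z * u) ^ m] (mod int r)"
      by (rule gauss_eval_pow[OF c])
    also have "[gauss_eval c (z * u) ^ m = (gauss_eval c z * gauss_eval c u) ^ m] (mod int r)"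
      by (intro cong_pow gauss_eval_mult[OF c])
    also have "[(gauss_eval c z * gauss_eval c u) ^ m = (int g * 1) ^ m] (mod int r)"
      by (intro cong_pow cong_mult eval_z eval_u)
    finally have eval_pow: "[gauss_eval c ((z * u) ^ m) = int g ^ m] (mod int r)"
      by simp
    have "[int g ^ m = 1] (mod int r)"
      using cong_trans[OF cong_sym[OF eval_pow] gauss_eval_cong[OF u(2)]] by simp
    then have "[g ^ m = 1] (mod r)"
      by (metis cong_int_iff of_nat_1 of_nat_power)
    then show ?thesis
      using ord_divides ord_g by metis
  qed
  ultimately show ?thesis
    using that by blast
qed

section \<open>Inert primes\<close>

definition gauss_mod :: "nat \<Rightarrow> gauss_int \<Rightarrow> gauss_int" where
  "gauss_mod r x = Gauss (re x mod int r) (im x mod int r)"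

lemma gauss_mod_eq_iff: "gauss_mod r x = gauss_mod r y \<longleftrightarrow> gauss_cong r x y"
  unfolding gauss_cong_def of_nat_dvd_gauss_int_iff gauss_mod_def gauss_int.inject mod_eq_dvd_iff
  by simp

lemma gauss_mod_cong: "gauss_cong r x y \<Longrightarrow> gauss_mod r x = gauss_mod r y"
  by (simp add: gauss_mod_eq_iff)

lemma gauss_cong_gauss_mod: "gauss_cong r (gauss_mod r x) x"
  by (simp add: gauss_cong_def of_nat_dvd_gauss_int_iff gauss_mod_def mod_eq_dvd_iff[symmetric])

lemma gauss_mod_simps [simp]:
  "gauss_mod r (gauss_mod r x) = gauss_mod r x"
  "gauss_mod r (gauss_mod r x * y) = gauss_mod r (x * y)"
  "gauss_mod r (x * gauss_mod r y) = gauss_mod r (x * y)"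
  "gauss_mod r (gauss_mod r x + y) = gauss_mod r (x + y)"
  "gauss_mod r (x + gauss_mod r y) = gauss_mod r (x + y)"
  "gauss_mod r 0 = 0"
  by (auto intro!: gauss_mod_cong gauss_cong_mult gauss_cong_add gauss_cong_gauss_mod)
    (simp add: gauss_mod_def zero_gauss_int_def)

definition gauss_residue_ring :: "nat \<Rightarrow> gauss_int ring" where
  "gauss_residue_ring r =
     \<lparr>carrier = range (gauss_mod r), monoid.mult = \<lambda>x y. gauss_mod r (x * y), one = gauss_mod r 1,
      zero = 0, add = \<lambda>x y. gauss_mod r (x + y)\<rparr>"

lemma gauss_residue_ring_simps [simp]:
  "carrier (gauss_residue_ring r) = range (gauss_mod r)"
  "x \<otimes>\<^bsub>gauss_residue_ring r\<^esub> y = gauss_mod r (x * y)"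
  "\<one>\<^bsub>gauss_residue_ring r\<^esub> = gauss_mod r 1"
  "\<zero>\<^bsub>gauss_residue_ring r\<^esub> = 0"
  "x \<oplus>\<^bsub>gauss_residue_ring r\<^esub> y = gauss_mod r (x + y)"
  by (simp_all add: gauss_residue_ring_def)

lemma gauss_cong_zero_iff_residue: "x \<in> range (gauss_mod r) \<Longrightarrow> gauss_cong r x 0 \<longleftrightarrow> x = 0"
  by (metis gauss_mod_eq_iff gauss_mod_simps(1,6) rangeE)

lemma zero_in_range_gauss_mod: "0 \<in> range (gauss_mod r)"
  by (rule range_eqI[where x = 0]) (simp add: gauss_mod_def zero_gauss_int_def)

lemma cring_gauss_residue_ring: "cring (gauss_residue_ring r)"
proof (rule cringI)
  show "abelian_group (gauss_residue_ring r)"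
  proof (rule abelian_groupI)
    fix x assume "x \<in> carrier (gauss_residue_ring r)"
    then obtain x' where "x = gauss_mod r x'"
      by auto
    then show "\<exists>y\<in>carrier (gauss_residue_ring r). y \<oplus>\<^bsub>gauss_residue_ring r\<^esub> x = \<zero>\<^bsub>gauss_residue_ring r\<^esub>"
      by (intro bexI[of _ "gauss_mod r (- x')"]) auto
  next
    fix x y z :: gauss_int
    show "x \<oplus>\<^bsub>gauss_residue_ring r\<^esub> y \<oplus>\<^bsub>gauss_residue_ring r\<^esub> z =
          x \<oplus>\<^bsub>gauss_residue_ring r\<^esub> (y \<oplus>\<^bsub>gauss_residue_ring r\<^esub> z)"
      by (simp add: add.assoc)
  qed (auto simp: add.commute zero_in_range_gauss_mod)
  show "comm_monoid (gauss_residue_ring r)"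
  proof (rule comm_monoidI)
    fix x y z :: gauss_int
    show "x \<otimes>\<^bsub>gauss_residue_ring r\<^esub> y \<otimes>\<^bsub>gauss_residue_ring r\<^esub> z =
          x \<otimes>\<^bsub>gauss_residue_ring r\<^esub> (y \<otimes>\<^bsub>gauss_residue_ring r\<^esub> z)"
      by (simp add: mult.assoc)
  qed (auto simp: mult.commute)
qed (simp add: distrib_right)

lemma inert_prime_dvd_gauss_norm:
  assumes r: "prime r" "r mod 4 = 3" and dvd: "int r dvd gauss_norm x"
  shows "gauss_cong r x 0"
proof -
  have pr: "prime (int r)"
    using r(1) by simp
  have "odd r"
    using r(2) by presburger
  then have no_sqrt: "\<not> [c ^ 2 = -1] (mod int r)" for c
    using minus_one_square_mod_prime_iff[OF r(1)] r(2) by auto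
  have "int r dvd im x"
  proof (rule ccontr)
    assume "\<not> int r dvd im x"
    then have "coprime (im x) (int r)"
      using prime_imp_coprime[OF pr] coprime_commute by blast
    then obtain t where t: "[im x * t = 1] (mod int r)"
      using cong_solve_coprime_int by blast
    have "[(im x * t) ^ 2 = 1] (mod int r)"
      using cong_pow[OF t, of 2] by simp
    then have "[(re x * t) ^ 2 + 1 = (re x * t) ^ 2 + (im x * t) ^ 2] (mod int r)"
      by (rule cong_add[OF cong_refl cong_sym])
    also have "[(re x * t) ^ 2 + (im x * t) ^ 2 = 0] (mod int r)"
      using dvd by (simp add: gauss_norm_def cong_0_iff power_mult_distrib flip: distrib_right)
    finally have "[(re x * t) ^ 2 + 1 - 1 = 0 - 1] (mod int r)"
      by (intro cong_diff cong_refl)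
    then have "[(re x * t) ^ 2 = -1] (mod int r)"
      by simp
    then show False
      using no_sqrt by blast
  qed
  moreover have "int r dvd re x ^ 2"
  proof -
    have "int r dvd im x ^ 2"
      using \<open>int r dvd im x\<close> by (simp add: power2_eq_square)
    then show ?thesis
      using dvd unfolding gauss_norm_def by (simp add: dvd_add_left_iff)
  qed
  then have "int r dvd re x"
    using pr prime_dvd_power by blast
  ultimately show ?thesis
    by (simp add: gauss_cong_def of_nat_dvd_gauss_int_iff)
qed

lemma gauss_mod_one: "1 < r \<Longrightarrow> gauss_mod r 1 = 1"
  by (auto simp: gauss_mod_def intro: gauss_int_eqI)

lemma coprime_gauss_norm_inert_prime:
  assumes "prime r" "r mod 4 = 3" "\<not> gauss_cong r x 0"
  shows "coprime (int r) (gauss_norm x)"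
proof -
  have "\<not> int r dvd gauss_norm x"
    using inert_prime_dvd_gauss_norm assms by blast
  then show ?thesis
    using prime_imp_coprime[of "int r"] assms(1) by simp
qed

lemma field_gauss_residue_ring:
  assumes r: "prime r" "r mod 4 = 3"
  shows "field (gauss_residue_ring r)"
proof -
  interpret cring "gauss_residue_ring r"
    by (rule cring_gauss_residue_ring)
  have one: "gauss_mod r 1 = 1"
    using prime_gt_1_nat[OF r(1)] by (rule gauss_mod_one)
  show ?thesis
  proof (rule field_intro2)
    show "\<zero>\<^bsub>gauss_residue_ring r\<^esub> \<noteq> \<one>\<^bsub>gauss_residue_ring r\<^esub>"
      using one by (simp add: zero_gauss_int_def one_gauss_int_def)
  next
    fix x assume "x \<in> carrier (gauss_residue_ring r) - {\<zero>\<^bsub>gauss_residue_ring r\<^esub>}"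
    then have x: "x \<in> range (gauss_mod r)" and "x \<noteq> 0"
      by auto
    then have "\<not> gauss_cong r x 0"
      by (simp add: gauss_cong_zero_iff_residue)
    then have "coprime (int r) (gauss_norm (gauss_cnj x))"
      using coprime_gauss_norm_inert_prime[OF r] by (simp add: gauss_norm_def gauss_cnj_def)
    then obtain u where "gauss_cong r (u * x) 1"
      using gauss_cnj_inverse_exists by fastforce
    then have "gauss_mod r (x * gauss_mod r u) = \<one>\<^bsub>gauss_residue_ring r\<^esub>"
      by (simp add: gauss_mod_cong mult.commute)
    moreover have "x \<in> carrier (gauss_residue_ring r)" "gauss_mod r u \<in> carrier (gauss_residue_ring r)"
      using x by simp_all
    ultimately show "x \<in> Units (gauss_residue_ring r)"
      unfolding Units_def by (auto simp: mult.commute)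
  qed
qed

lemma card_gauss_residue_ring:
  assumes "r > 0"
  shows "finite (carrier (gauss_residue_ring r))" "card (carrier (gauss_residue_ring r)) = r * r"
proof -
  have "range (gauss_mod r) = (\<lambda>(a, b). Gauss a b) ` ({0..<int r} \<times> {0..<int r})"
  proof safe
    fix a b assume "a \<in> {0..<int r}" "b \<in> {0..<int r}"
    then have "Gauss a b = gauss_mod r (Gauss a b)"
      by (simp add: gauss_mod_def)
    then show "Gauss a b \<in> range (gauss_mod r)"
      by (rule range_eqI)
  qed (use assms in \<open>auto simp: gauss_mod_def\<close>)
  moreover have "inj_on (\<lambda>(a, b). Gauss a b) ({0..<int r} \<times> {0..<int r})"
    by (auto simp: inj_on_def)
  ultimately show "finite (carrier (gauss_residue_ring r))" "card (carrier (gauss_residue_ring r)) = r * r"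
    by (simp_all add: card_image card_cartesian_product)
qed

lemma gauss_residue_ring_nat_pow: "x [^]\<^bsub>gauss_residue_ring r\<^esub> (k :: nat) = gauss_mod r (x ^ k)"
  by (induction k) (simp_all add: mult.commute)

lemma gauss_residue_ring_primitive_element:
  assumes r: "prime r" "r mod 4 = 3"
  obtains a where "\<not> gauss_cong r a 0" and "\<And>k. gauss_cong r (a ^ k) 1 \<Longrightarrow> r * r - 1 dvd k"
proof -
  let ?R = "gauss_residue_ring r"
  interpret F: field ?R
    by (rule field_gauss_residue_ring[OF r])
  interpret M: group "mult_of ?R"
    by (rule F.field_mult_group)
  have "r > 0"
    using prime_gt_0_nat[OF r(1)] .
  note fin = card_gauss_residue_ring(1)[OF this] and card = card_gauss_residue_ring(2)[OF this]
  obtain a where a: "a \<in> carrier (mult_of ?R)"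
    and gen: "carrier (mult_of ?R) = {a [^]\<^bsub>?R\<^esub> i | i::nat. i \<in> UNIV}"
    using F.finite_field_mult_group_has_gen[OF fin] by blast
  have "M.ord a \<noteq> 0"
    using M.ord_ge_1[OF _ a] fin by simp
  then have "generate (mult_of ?R) {a} = carrier (mult_of ?R)"
    using M.generate_pow_nat[OF a] gen by (simp add: nat_pow_mult_of)
  then have "M.ord a = order (mult_of ?R)"
    using M.generate_pow_card[OF a] by (simp add: order_def)
  also have "\<dots> = r * r - 1"
    using F.order_mult_of[OF fin] card by (simp add: order_def)
  finally have ord: "M.ord a = r * r - 1" .
  have "r * r - 1 dvd k" if "gauss_cong r (a ^ k) 1" for k
  proof -
    have "a [^]\<^bsub>mult_of ?R\<^esub> k = \<one>\<^bsub>mult_of ?R\<^esub>"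
      using gauss_mod_cong[OF that] by (simp add: nat_pow_mult_of gauss_residue_ring_nat_pow)
    then show ?thesis
      using M.pow_eq_id[OF a] ord by simp
  qed
  moreover have "\<not> gauss_cong r a 0"
    using a by (auto simp: gauss_cong_zero_iff_residue)
  ultimately show ?thesis
    using that by blast
qed

lemma conj_ratio_order_inert_prime:
  assumes r: "prime r" "r mod 4 = 3"
  obtains z where "coprime (int r) (gauss_norm z)" and "\<And>m. conj_ratio_pow_one r z m \<Longrightarrow> r + 1 dvd m"
proof -
  obtain a where a: "\<not> gauss_cong r a 0" and ord: "\<And>k. gauss_cong r (a ^ k) 1 \<Longrightarrow> r * r - 1 dvd k"
    using gauss_residue_ring_primitive_element[OF r] by blast
  have coprime_a: "coprime (int r) (gauss_norm a)"
    by (rule coprime_gauss_norm_inert_prime[OF r a])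
  have "r + 1 dvd m" if pow_one: "conj_ratio_pow_one r a m" for m
  proof -
    obtain u where u1: "gauss_cong r (u * gauss_cnj a) 1" and u2: "gauss_cong r ((a * u) ^ m) 1"
      using pow_one unfolding conj_ratio_pow_one_def by blast
    have "gauss_cnj a ^ m = 1 * gauss_cnj a ^ m"
      by simp
    also have "gauss_cong r \<dots> ((a * u) ^ m * gauss_cnj a ^ m)"
      using gauss_cong_sym[OF u2] by (intro gauss_cong_mult gauss_cong_refl)
    also have "(a * u) ^ m * gauss_cnj a ^ m = a ^ m * (u * gauss_cnj a) ^ m"
      by (simp add: power_mult_distrib mult_ac)
    also have "gauss_cong r \<dots> (a ^ m * 1 ^ m)"
      using u1 by (intro gauss_cong_mult gauss_cong_pow gauss_cong_refl)
    finally have cnj_pow: "gauss_cong r (gauss_cnj a ^ m) (a ^ m)"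
      by simp
    \<comment> \<open>With conj a \<equiv> a^r this reads a^(rm) \<equiv> a^m; cancel a^m by an inverse v of a.\<close>
    obtain v where v: "gauss_cong r (v * a) 1"
      using gauss_cnj_inverse_exists[of r "gauss_cnj a"] coprime_a
      by (auto simp: gauss_norm_def gauss_cnj_def)
    have "r > 0"
      using prime_gt_0_nat[OF r(1)] .
    then have "(r - 1) * m + m = r * m"
      by (simp add: diff_mult_distrib)
    then have exp: "a ^ ((r - 1) * m) * a ^ m = (a ^ r) ^ m"
      by (simp only: power_add[symmetric] power_mult[symmetric])
    have "a ^ ((r - 1) * m) * (v * a) ^ m = (a ^ ((r - 1) * m) * a ^ m) * v ^ m"
      by (simp add: power_mult_distrib mult_ac)
    also have "\<dots> = (a ^ r) ^ m * v ^ m"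
      by (simp only: exp)
    also have "gauss_cong r \<dots> (gauss_cnj a ^ m * v ^ m)"
      using gauss_frobenius_3_mod_4[OF r] by (intro gauss_cong_mult gauss_cong_pow gauss_cong_refl)
    also have "gauss_cong r \<dots> (a ^ m * v ^ m)"
      using cnj_pow by (intro gauss_cong_mult gauss_cong_refl)
    also have "a ^ m * v ^ m = (v * a) ^ m"
      by (simp add: power_mult_distrib mult.commute)
    also have "gauss_cong r \<dots> (1 ^ m)"
      using v by (rule gauss_cong_pow)
    finally have "gauss_cong r (a ^ ((r - 1) * m) * (v * a) ^ m) 1"
      by simp
    moreover have "gauss_cong r (a ^ ((r - 1) * m) * 1 ^ m) (a ^ ((r - 1) * m) * (v * a) ^ m)"
      using gauss_cong_sym[OF v] by (intro gauss_cong_mult gauss_cong_pow gauss_cong_refl)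
    ultimately have "gauss_cong r (a ^ ((r - 1) * m)) 1"
      using gauss_cong_trans by fastforce
    then have "r * r - 1 dvd (r - 1) * m"
      by (rule ord)
    moreover have "r * r - 1 = (r - 1) * (r + 1)"
      by (simp add: algebra_simps diff_mult_distrib)
    moreover have "r - 1 > 0"
      using prime_gt_1_nat[OF r(1)] by simp
    ultimately show ?thesis
      by (metis nat_mult_dvd_cancel1)
  qed
  then show ?thesis
    using that coprime_a by blast
qed

lemma conj_ratio_order_prime:
  assumes "prime r" "odd r"
  obtains z where "coprime (int r) (gauss_norm z)" and "\<And>m. conj_ratio_pow_one r z m \<Longrightarrow> F r dvd m"
proof (cases "r mod 4 = 1")
  case True
  then have "F r = r - 1"
    by (simp add: F_def)
  obtain z where "coprime (int r) (gauss_norm z)" "\<And>m. conj_ratio_pow_one r z m \<Longrightarrow> r - 1 dvd m"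
    using conj_ratio_order_split_prime[OF assms(1) True] by blast
  then show ?thesis
    using that \<open>F r = r - 1\<close> by simp
next
  case False
  then have "r mod 4 = 3"
    using assms(2) by presburger
  then have "F r = r + 1"
    by (simp add: F_def)
  obtain z where "coprime (int r) (gauss_norm z)" "\<And>m. conj_ratio_pow_one r z m \<Longrightarrow> r + 1 dvd m"
    using conj_ratio_order_inert_prime[OF assms(1) \<open>r mod 4 = 3\<close>] by blast
  then show ?thesis
    using that \<open>F r = r + 1\<close> by simp
qed

section \<open>Products of two primes\<close>

definition chi4 :: "nat \<Rightarrow> int" where
  "chi4 n = (if n mod 4 = 1 then 1 else -1)"

lemma int_F_odd:
  assumes "odd n"
  shows "int (F n) = int n - chi4 n"
proof -
  have "n mod 4 = 1 \<or> n mod 4 = 3" "n \<ge> 1"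
    using assms by presburger+
  then show ?thesis
    by (auto simp: F_def chi4_def)
qed

lemma chi4_mult:
  assumes "odd m" "odd n"
  shows "chi4 (m * n) = chi4 m * chi4 n"
proof -
  have "m mod 4 = 1 \<or> m mod 4 = 3" "n mod 4 = 1 \<or> n mod 4 = 3"
    using assms by presburger+
  moreover have "(m * n) mod 4 = (m mod 4) * (n mod 4) mod 4"
    by (simp add: mod_mult_eq)
  ultimately show ?thesis
    unfolding chi4_def by auto
qed

lemma F_dvd_F_mult_imp_twin:
  fixes p q :: nat
  assumes "odd p" "odd q" "1 < p" "p < q" and dvd: "F q dvd F (p * q)"
  shows "q = p + 2 \<and> 8 dvd p + q"
proof -
  \<comment> \<open>Modulo F q = q - chi4 q, F (p q) = p q - chi4 p chi4 q reduces to chi4 q (p - chi4 p), and chi4 q = \<plusminus>1.\<close>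
  have "int (F q) dvd int (F (p * q))"
    using dvd by (simp only: int_dvd_int_iff)
  then have "int q - chi4 q dvd int p * int q - chi4 p * chi4 q"
    using int_F_odd[of q] int_F_odd[of "p * q"] chi4_mult[of p q] assms(1,2) by simp
  moreover have "int q - chi4 q dvd int p * (int q - chi4 q)"
    by simp
  ultimately have "int q - chi4 q dvd int p * (int q - chi4 q) - (int p * int q - chi4 p * chi4 q)"
    by (rule dvd_diff[rotated])
  also have "int p * (int q - chi4 q) - (int p * int q - chi4 p * chi4 q) = - chi4 q * (int p - chi4 p)"
    by (simp add: algebra_simps)
  finally have "int q - chi4 q dvd chi4 q * (chi4 q * (int p - chi4 p))"
    by simp
  moreover have "chi4 q * (chi4 q * (int p - chi4 p)) = int p - chi4 p"
    by (simp add: chi4_def)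
  ultimately have "int q - chi4 q dvd int p - chi4 p"
    by simp
  then have "int q - chi4 q \<le> int p - chi4 p"
    using assms(3) by (intro zdvd_imp_le) (auto simp: chi4_def)
  then show ?thesis
    using assms(1-4) unfolding chi4_def by (auto split: if_splits) presburger+
qed

lemma gauss_carmichael_imp_F_dvd:
  assumes carmichael: "gauss_carmichael (p * q)" and q: "prime q" "odd q" and "coprime p q"
  shows "F q dvd F (p * q)"
proof -
  obtain z where z: "coprime (int q) (gauss_norm z)" and order: "\<And>m. conj_ratio_pow_one q z m \<Longrightarrow> F q dvd m"
    using conj_ratio_order_prime[OF q] by blast
  obtain z' where "gauss_cong p z' 1" "gauss_cong q z' z"
    using gauss_crt_exists[OF \<open>coprime p q\<close>] by blast
  have "coprime (int p) (gauss_norm z')"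
    using coprime_gauss_norm_cong[OF \<open>gauss_cong p z' 1\<close>] by (simp add: gauss_norm_def)
  moreover have "coprime (int q) (gauss_norm z')"
    using coprime_gauss_norm_cong[OF \<open>gauss_cong q z' z\<close>] z by simp
  ultimately have "coprime (int (p * q)) (gauss_norm z')"
    by simp
  then have "conj_ratio_pow_one (p * q) z' (F (p * q))"
    using carmichael unfolding gauss_carmichael_iff by blast
  then have "conj_ratio_pow_one q z' (F (p * q))"
    by (rule conj_ratio_pow_one_dvd[OF dvd_triv_right])
  then show ?thesis
    by (rule order[OF conj_ratio_pow_one_cong[OF \<open>gauss_cong q z' z\<close>]])
qed

lemma gauss_carmichael_twin_primes:
  assumes p: "prime p" "p mod 4 = 3" and q: "prime (p + 2)"
  shows "gauss_carmichael (p * (p + 2))"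
proof -
  have "(p + 2) mod 4 = 1"
    using p(2) by presburger
  then have "p * (p + 2) mod 4 = 3"
    using p(2) mod_mult_eq[of p 4 "p + 2"] by simp
  then have "F (p * (p + 2)) = (p + 1) ^ 2"
    by (simp add: F_def power2_eq_square algebra_simps)
  moreover have "composite (p * (p + 2))"
    using prime_gt_1_nat[OF p(1)] prime_product[of p "p + 2"] by (auto simp: composite_def one_less_mult)
  ultimately show ?thesis
    using conj_ratio_pow_one_twin_primes[OF p q] by (simp add: gauss_carmichael_iff)
qed

theorem mainTheorem11:
  fixes p q :: nat
  assumes "prime p" and "prime q" and "odd p" and "odd q" and "p < q"
  shows "gauss_carmichael (p * q) \<longleftrightarrow> q = p + 2 \<and> 8 dvd (p + q)"
proof
  assume carmichael: "gauss_carmichael (p * q)"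
  have "coprime p q"
    using assms by (simp add: primes_coprime)
  then have "F q dvd F (p * q)"
    by (rule gauss_carmichael_imp_F_dvd[OF carmichael assms(2,4)])
  then show "q = p + 2 \<and> 8 dvd (p + q)"
    by (rule F_dvd_F_mult_imp_twin[OF assms(3,4) prime_gt_1_nat[OF assms(1)] assms(5)])
next
  assume twin: "q = p + 2 \<and> 8 dvd (p + q)"
  then have "p mod 4 = 3"
    by presburger
  then show "gauss_carmichael (p * q)"
    using gauss_carmichael_twin_primes assms(1,2) twin by blast
qed

end
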